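(* Let $X$ be a finite connected poset, $\theta\in\mathcal{M}(X)$, and let $C:x_1<\dots<x_n$ and $D:y_1<\dots<y_m$ be maximal chains of $X$. Assume $x_i=y_j$ for some $1<i<n$ and $1<j<m$. If $\theta$ is increasing (resp. decreasing) on $C$, then it is increasing (resp. decreasing) on $D$. Moreover, if $\theta(C):u_1<\dots<u_n$ and $\theta(D):v_1<\dots<v_m$, then $u_i=v_j$ (resp. $u_{n-i+1}=v_{m-j+1}$).
   Context: For $x<y$, $e_{xy}$ denotes the incidence-algebra basis element and $B=\{e_{xy}:x<y\}$. For a bijection $\theta:B\to B$ and a maximal chain $C:u_1<\dots<u_k$, $\theta$ is increasing on $C$ if there is a maximal chain $D':v_1<\dots<v_k$ with $\theta(e_{u_pu_q})=e_{v_pv_q}$ for all $p<q$, and decreasing if there is such $D'$ with $\theta(e_{u_pu_q})=e_{v_{k-q+1}v_{k-p+1}}$ for all $p<q$; in either case $\theta(C)$ denotes $D'$. $\mathcal{M}(X)$ is the set of bijections $B\to B$ increasing or decreasing on every maximal chain. *)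

theory Defs
  imports Main
begin

text \<open>A poset X is modelled as a finite carrier set X of a type with a partial order.
  The basis B of the incidence algebra is modelled by pairs (x,y) with x<y in X,
  standing for e_xy.\<close>

definition basis :: "'a::order set \<Rightarrow> ('a \<times> 'a) set" where
  "basis X = {(x, y). x \<in> X \<and> y \<in> X \<and> x < y}"

definition connected_poset :: "'a::order set \<Rightarrow> bool" where
  "connected_poset X \<longleftrightarrow> X \<noteq> {} \<and>
     (\<forall>x\<in>X. \<forall>y\<in>X. (\<lambda>a b. a \<in> X \<and> b \<in> X \<and> (a \<le> b \<or> b \<le> a))\<^sup>*\<^sup>* x y)"

definition maximal_chain :: "'a::order set \<Rightarrow> 'a list \<Rightarrow> bool" where
  "maximal_chain X cs \<longleftrightarrow> cs \<noteq> [] \<and> sorted_wrt (<) cs \<and> set cs \<subseteq> X \<and>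
     (\<forall>z\<in>X. (\<forall>c\<in>set cs. c \<le> z \<or> z \<le> c) \<longrightarrow> z \<in> set cs)"

text \<open>D is a witness that theta is increasing on C (indices 0-based).\<close>
definition increasing_wit :: "'a::order set \<Rightarrow> ('a \<times> 'a \<Rightarrow> 'a \<times> 'a) \<Rightarrow> 'a list \<Rightarrow> 'a list \<Rightarrow> bool" where
  "increasing_wit X \<theta> C D \<longleftrightarrow> maximal_chain X D \<and> length D = length C \<and>
     (\<forall>p q. p < q \<and> q < length C \<longrightarrow> \<theta> (C ! p, C ! q) = (D ! p, D ! q))"

definition decreasing_wit :: "'a::order set \<Rightarrow> ('a \<times> 'a \<Rightarrow> 'a \<times> 'a) \<Rightarrow> 'a list \<Rightarrow> 'a list \<Rightarrow> bool" where
  "decreasing_wit X \<theta> C D \<longleftrightarrow> maximal_chain X D \<and> length D = length C \<and>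
     (\<forall>p q. p < q \<and> q < length C \<longrightarrow>
        \<theta> (C ! p, C ! q) = (D ! (length C - 1 - q), D ! (length C - 1 - p)))"

definition increasing_on :: "'a::order set \<Rightarrow> ('a \<times> 'a \<Rightarrow> 'a \<times> 'a) \<Rightarrow> 'a list \<Rightarrow> bool" where
  "increasing_on X \<theta> C \<longleftrightarrow> (\<exists>D. increasing_wit X \<theta> C D)"

definition decreasing_on :: "'a::order set \<Rightarrow> ('a \<times> 'a \<Rightarrow> 'a \<times> 'a) \<Rightarrow> 'a list \<Rightarrow> bool" where
  "decreasing_on X \<theta> C \<longleftrightarrow> (\<exists>D. decreasing_wit X \<theta> C D)"

text \<open>The set M(X). Bijections are considered as maps on B; values outside B are irrelevant.\<close>
definition M_set :: "'a::order set \<Rightarrow> ('a \<times> 'a \<Rightarrow> 'a \<times> 'a) set" where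
  "M_set X = {\<theta>. bij_betw \<theta> (basis X) (basis X) \<and>
     (\<forall>C. maximal_chain X C \<longrightarrow> increasing_on X \<theta> C \<or> decreasing_on X \<theta> C)}"

end

theory Submission
  imports Defs
begin

(* An increasing and a decreasing map in M(X) cannot agree on a common bottom edge e_{x_1x_2} of
   two maximal chains of length at least 3: the increasing one sends it to the bottom edge of the
   image chain, whose upper vertex lies below another element of X, the decreasing one to the top
   edge of a maximal chain, whose upper vertex is maximal in X. The same holds for top edges.
   The spliced chain x_1 < ... < x_i = y_j < y_(j+1) < ... < y_m is maximal and shares its bottom
   edge with C and its top edge with D, so theta has the same type on C, on it and on D; comparing
   the images of e_{x_1x_i} and e_{x_iy_m} then locates the image of the common vertex. *)

lemma maximal_chain_nth_less:
  "maximal_chain X C \<Longrightarrow> p < q \<Longrightarrow> q < length C \<Longrightarrow> C ! p < C ! q"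
  unfolding maximal_chain_def by (auto simp: sorted_wrt_iff_nth_less)

lemma maximal_chain_nth_le_iff:
  assumes "maximal_chain X C" "p < length C" "q < length C"
  shows "C ! p \<le> C ! q \<longleftrightarrow> p \<le> q"
  using maximal_chain_nth_less[OF assms(1), of p q] maximal_chain_nth_less[OF assms(1), of q p] assms
  by (cases p q rule: linorder_cases) auto

lemma maximal_chain_nth_mem: "maximal_chain X C \<Longrightarrow> p < length C \<Longrightarrow> C ! p \<in> X"
  unfolding maximal_chain_def by auto

lemma maximal_chain_comparable_eq_nth:
  "maximal_chain X C \<Longrightarrow> z \<in> X \<Longrightarrow> (\<And>p. p < length C \<Longrightarrow> C ! p \<le> z \<or> z \<le> C ! p)
    \<Longrightarrow> \<exists>p < length C. z = C ! p"
  unfolding maximal_chain_def by (metis in_set_conv_nth)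

lemma maximal_chain_nth_below:
  assumes C: "maximal_chain X C" and i: "i < length C" and z: "z \<in> X" "z \<le> C ! i"
    and comparable: "\<And>p. p \<le> i \<Longrightarrow> C ! p \<le> z \<or> z \<le> C ! p"
  shows "\<exists>p \<le> i. z = C ! p"
proof -
  have "C ! p \<le> z \<or> z \<le> C ! p" if "p < length C" for p
    using comparable[of p] z(2) maximal_chain_nth_le_iff[OF C i that] by (cases "p \<le> i") auto
  then obtain p where "p < length C" "z = C ! p"
    using maximal_chain_comparable_eq_nth[OF C z(1)] by blast
  then show ?thesis
    using z(2) maximal_chain_nth_le_iff[OF C _ i] by auto
qed

lemma maximal_chain_nth_above:
  assumes C: "maximal_chain X C" and i: "i < length C" and z: "z \<in> X" "C ! i \<le> z"
    and comparable: "\<And>p. i \<le> p \<Longrightarrow> p < length C \<Longrightarrow> C ! p \<le> z \<or> z \<le> C ! p"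
  shows "\<exists>p. i \<le> p \<and> p < length C \<and> z = C ! p"
proof -
  have "C ! p \<le> z \<or> z \<le> C ! p" if "p < length C" for p
    using comparable[of p] z(2) maximal_chain_nth_le_iff[OF C that i] that by (cases "i \<le> p") auto
  then obtain p where "p < length C" "z = C ! p"
    using maximal_chain_comparable_eq_nth[OF C z(1)] by blast
  then show ?thesis
    using z(2) maximal_chain_nth_le_iff[OF C i] by auto
qed

lemma maximal_chain_last_maximal:
  assumes C: "maximal_chain X C" and z: "z \<in> X"
  shows "\<not> C ! (length C - 1) < z"
proof
  assume less: "C ! (length C - 1) < z"
  have below_last: "C ! p \<le> C ! (length C - 1)" if "p < length C" for p
    using maximal_chain_nth_le_iff[OF C that] that by simp
  then have "C ! p \<le> z" if "p < length C" for p
    using less that by (meson order.trans less_imp_le)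
  then obtain p where "p < length C" "z = C ! p"
    using maximal_chain_comparable_eq_nth[OF C z] by blast
  then have "z \<le> C ! (length C - 1)"
    using below_last by simp
  then show False
    using less by simp
qed

lemma maximal_chain_first_minimal:
  assumes C: "maximal_chain X C" and z: "z \<in> X"
  shows "\<not> z < C ! 0"
proof
  assume less: "z < C ! 0"
  have above_first: "C ! 0 \<le> C ! p" if "p < length C" for p
    using maximal_chain_nth_le_iff[of X C 0 p] C that by force
  then have "z \<le> C ! p" if "p < length C" for p
    using less that by (meson order.trans less_imp_le)
  then obtain p where "p < length C" "z = C ! p"
    using maximal_chain_comparable_eq_nth[OF C z] by blast
  then have "C ! 0 \<le> z"
    using above_first by simp
  then show False
    using less by simp
qed

lemma set_take_Suc_eq_nth_image: "i < length xs \<Longrightarrow> set (take (Suc i) xs) = (!) xs ` {..i}"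
  using nth_image[of "Suc i" xs] by (simp add: atLeast0LessThan lessThan_Suc_atMost)

lemma set_drop_eq_nth_image: "set (drop n xs) = (!) xs ` {n..<length xs}"
proof (intro set_eqI iffI)
  fix x assume "x \<in> set (drop n xs)"
  then obtain k where "k < length (drop n xs)" "x = drop n xs ! k"
    by (auto simp: in_set_conv_nth)
  then show "x \<in> (!) xs ` {n..<length xs}"
    by (intro image_eqI[of _ _ "n + k"]) auto
next
  fix x assume "x \<in> (!) xs ` {n..<length xs}"
  then obtain q where "n \<le> q" "q < length xs" "x = xs ! q"
    by auto
  then have "x = drop n xs ! (q - n)" "q - n < length (drop n xs)"
    by auto
  then show "x \<in> set (drop n xs)"
    by (metis nth_mem)
qed

definition splice_chain :: "'a list \<Rightarrow> nat \<Rightarrow> 'a list \<Rightarrow> nat \<Rightarrow> 'a list" where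
  "splice_chain C i D j = take (Suc i) C @ drop (Suc j) D"

lemma length_splice_chain:
  "i < length C \<Longrightarrow> length (splice_chain C i D j) = Suc i + (length D - Suc j)"
  by (simp add: splice_chain_def)

lemma nth_splice_chain_left:
  "p \<le> i \<Longrightarrow> i < length C \<Longrightarrow> splice_chain C i D j ! p = C ! p"
  by (simp add: splice_chain_def nth_append)

lemma nth_splice_chain_right:
  assumes "i < length C" "C ! i = D ! j" "j \<le> q" "q < length D"
  shows "splice_chain C i D j ! (i + (q - j)) = D ! q"
proof (cases "q = j")
  case True
  then show ?thesis using assms by (simp add: nth_splice_chain_left)
next
  case False
  then have "i + (q - j) = length (take (Suc i) C) + (q - Suc j)"
    using assms(1,3) by simp
  then show ?thesis
    using assms False unfolding splice_chain_def by (simp only: nth_append_length_plus) simp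
qed

lemma set_splice_chain:
  "i < length C \<Longrightarrow> set (splice_chain C i D j) = (!) C ` {..i} \<union> (!) D ` {Suc j..<length D}"
  by (simp add: splice_chain_def set_take_Suc_eq_nth_image set_drop_eq_nth_image)

lemma maximal_chain_splice:
  assumes C: "maximal_chain X C" and D: "maximal_chain X D"
    and i: "i < length C" and j: "j < length D" and joint: "C ! i = D ! j"
  shows "maximal_chain X (splice_chain C i D j)" (is "maximal_chain X ?E")
proof -
  have set_E: "set ?E = (!) C ` {..i} \<union> (!) D ` {Suc j..<length D}"
    using set_splice_chain[OF i] .
  have joint_in: "C ! i \<in> set ?E"
    using set_E by auto
  have "C ! p < D ! q" if "p \<le> i" "j < q" "q < length D" for p q
    using that i j joint maximal_chain_nth_le_iff[OF C, of p i] maximal_chain_nth_less[OF D, of j q]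
    by (metis le_less_trans)
  then have sorted: "sorted_wrt (<) ?E"
    using C D unfolding splice_chain_def maximal_chain_def sorted_wrt_append
    by (auto simp: sorted_wrt_take sorted_wrt_drop set_take_Suc_eq_nth_image[OF i] set_drop_eq_nth_image)
  have "set ?E \<subseteq> X"
    using C D i by (auto simp: set_E maximal_chain_nth_mem)
  moreover have "z \<in> set ?E"
    if z: "z \<in> X" and comparable: "\<forall>c\<in>set ?E. c \<le> z \<or> z \<le> c" for z
  proof (cases "z \<le> C ! i")
    case True
    then obtain p where "p \<le> i" "z = C ! p"
      using maximal_chain_nth_below[OF C i z True] comparable set_E by blast
    then show ?thesis
      using set_E by auto
  next
    case False
    then have "D ! j \<le> z"
      using comparable joint_in joint by auto
    moreover have "D ! q \<le> z \<or> z \<le> D ! q" if "j \<le> q" "q < length D" for q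
      using comparable joint joint_in set_E that by (cases "q = j") auto
    ultimately obtain q where "j \<le> q" "q < length D" "z = D ! q"
      using maximal_chain_nth_above[OF D j z] by blast
    then show ?thesis
      using set_E joint joint_in by (cases "q = j") auto
  qed
  ultimately show ?thesis
    using sorted i by (auto simp: maximal_chain_def splice_chain_def)
qed

lemma increasing_wit_apply:
  "increasing_wit X \<theta> C U \<Longrightarrow> p < q \<Longrightarrow> q < length C \<Longrightarrow> \<theta> (C ! p, C ! q) = (U ! p, U ! q)"
  unfolding increasing_wit_def by blast

lemma decreasing_wit_apply:
  "decreasing_wit X \<theta> C U \<Longrightarrow> p < q \<Longrightarrow> q < length C \<Longrightarrow>
    \<theta> (C ! p, C ! q) = (U ! (length C - 1 - q), U ! (length C - 1 - p))"
  unfolding decreasing_wit_def by blast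

lemma increasing_wit_common_edge:
  assumes "increasing_wit X \<theta> C U" "increasing_wit X \<theta> D V"
    and "p < q" "q < length C" "p' < q'" "q' < length D" "C ! p = D ! p'" "C ! q = D ! q'"
  shows "U ! p = V ! p' \<and> U ! q = V ! q'"
  using increasing_wit_apply[OF assms(1,3,4)] increasing_wit_apply[OF assms(2,5,6)] assms(7,8) by simp

lemma decreasing_wit_common_edge:
  assumes "decreasing_wit X \<theta> C U" "decreasing_wit X \<theta> D V"
    and "p < q" "q < length C" "p' < q'" "q' < length D" "C ! p = D ! p'" "C ! q = D ! q'"
  shows "U ! (length C - 1 - q) = V ! (length D - 1 - q') \<and>
    U ! (length C - 1 - p) = V ! (length D - 1 - p')"
  using decreasing_wit_apply[OF assms(1,3,4)] decreasing_wit_apply[OF assms(2,5,6)] assms(7,8) by simp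

lemma not_increasing_decreasing_common_first_edge:
  assumes "increasing_on X \<theta> C" "decreasing_on X \<theta> E"
    and "C ! 0 = E ! 0" "C ! 1 = E ! 1" "2 < length C" "1 < length E"
  shows False
proof -
  obtain U W where U: "increasing_wit X \<theta> C U" and W: "decreasing_wit X \<theta> E W"
    using assms(1,2) unfolding increasing_on_def decreasing_on_def by blast
  have U_chain: "maximal_chain X U" "length U = length C"
    and W_chain: "maximal_chain X W" "length W = length E"
    using U W unfolding increasing_wit_def decreasing_wit_def by auto
  have "(U ! 0, U ! 1) = (W ! (length E - 1 - 1), W ! (length E - 1 - 0))"
    using increasing_wit_apply[OF U, of 0 1] decreasing_wit_apply[OF W, of 0 1] assms(3-6) by simp
  then have "U ! 1 = W ! (length W - 1)"
    using W_chain by simp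
  moreover have "U ! 1 < U ! 2" "U ! 2 \<in> X"
    using maximal_chain_nth_less[OF U_chain(1), of 1 2] maximal_chain_nth_mem[OF U_chain(1), of 2]
      U_chain(2) assms(5) by auto
  ultimately show False
    using maximal_chain_last_maximal[OF W_chain(1)] by metis
qed

lemma not_increasing_decreasing_common_last_edge:
  assumes "increasing_on X \<theta> E" "decreasing_on X \<theta> D"
    and "E ! (length E - 2) = D ! (length D - 2)" "E ! (length E - 1) = D ! (length D - 1)"
    and "2 < length E" "1 < length D"
  shows False
proof -
  obtain W V where W: "increasing_wit X \<theta> E W" and V: "decreasing_wit X \<theta> D V"
    using assms(1,2) unfolding increasing_on_def decreasing_on_def by blast
  have W_chain: "maximal_chain X W" "length W = length E" and V_chain: "maximal_chain X V"
    using W V unfolding increasing_wit_def decreasing_wit_def by auto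
  have "(W ! (length E - 2), W ! (length E - 1)) =
      (V ! (length D - 1 - (length D - 1)), V ! (length D - 1 - (length D - 2)))"
    using increasing_wit_apply[OF W, of "length E - 2" "length E - 1"]
      decreasing_wit_apply[OF V, of "length D - 2" "length D - 1"] assms(3-6) by simp
  then have "W ! (length E - 2) = V ! 0"
    by simp
  moreover have "W ! (length E - 3) < W ! (length E - 2)" "W ! (length E - 3) \<in> X"
    using maximal_chain_nth_less[OF W_chain(1), of "length E - 3" "length E - 2"]
      maximal_chain_nth_mem[OF W_chain(1), of "length E - 3"] W_chain(2) assms(5) by auto
  ultimately show False
    using maximal_chain_first_minimal[OF V_chain] by metis
qed

lemma decreasing_on_iff_not_increasing_on:
  assumes "\<theta> \<in> M_set X" "maximal_chain X C" "2 < length C"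
  shows "decreasing_on X \<theta> C \<longleftrightarrow> \<not> increasing_on X \<theta> C"
  using assms not_increasing_decreasing_common_first_edge[of X \<theta> C C] unfolding M_set_def by auto

lemma increasing_on_iff_common_first_edge:
  assumes "\<theta> \<in> M_set X" "maximal_chain X C" "maximal_chain X E"
    and "C ! 0 = E ! 0" "C ! 1 = E ! 1" "2 < length C" "2 < length E"
  shows "increasing_on X \<theta> C \<longleftrightarrow> increasing_on X \<theta> E"
  using assms decreasing_on_iff_not_increasing_on[OF assms(1)]
    not_increasing_decreasing_common_first_edge[of X \<theta> C E]
    not_increasing_decreasing_common_first_edge[of X \<theta> E C]
  by fastforce

lemma increasing_on_iff_common_last_edge:
  assumes "\<theta> \<in> M_set X" "maximal_chain X E" "maximal_chain X D"
    and "E ! (length E - 2) = D ! (length D - 2)" "E ! (length E - 1) = D ! (length D - 1)"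
    and "2 < length E" "2 < length D"
  shows "increasing_on X \<theta> E \<longleftrightarrow> increasing_on X \<theta> D"
  using assms decreasing_on_iff_not_increasing_on[OF assms(1)]
    not_increasing_decreasing_common_last_edge[of X \<theta> E D]
    not_increasing_decreasing_common_last_edge[of X \<theta> D E]
  by fastforce

lemma splice_chain_end_edges:
  assumes "0 < i" "i < length C" "j < length D - 1" "C ! i = D ! j"
  defines "E \<equiv> splice_chain C i D j"
  shows "2 < length E" "i < length E - 1"
    and "E ! 0 = C ! 0" "E ! 1 = C ! 1" "E ! i = C ! i"
    and "E ! (length E - 2) = D ! (length D - 2)" "E ! (length E - 1) = D ! (length D - 1)"
proof -
  have len: "length E = Suc i + (length D - Suc j)"
    unfolding E_def using length_splice_chain[OF assms(2)] .
  then show "2 < length E" "i < length E - 1"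
    using assms(1,3) by auto
  show "E ! 0 = C ! 0" "E ! 1 = C ! 1" "E ! i = C ! i"
    unfolding E_def using assms(1,2) by (simp_all add: nth_splice_chain_left)
  have "length E - 2 = i + (length D - 2 - j)" "length E - 1 = i + (length D - 1 - j)"
    using len assms(3) by auto
  then show "E ! (length E - 2) = D ! (length D - 2)" "E ! (length E - 1) = D ! (length D - 1)"
    unfolding E_def
    by (simp_all only:) (rule nth_splice_chain_right[OF assms(2,4)]; use assms(3) in auto)+
qed

theorem lemma3p5:
  fixes X :: "'a::order set" and \<theta> :: "'a \<times> 'a \<Rightarrow> 'a \<times> 'a"
    and C D :: "'a list" and i j :: nat
  assumes "finite X" and "connected_poset X" and "\<theta> \<in> M_set X"
    and "maximal_chain X C" and "maximal_chain X D"
    and "0 < i" and "i < length C - 1" and "0 < j" and "j < length D - 1"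
    and "C ! i = D ! j"
  shows "(increasing_on X \<theta> C \<longrightarrow> increasing_on X \<theta> D \<and>
            (\<forall>U V. increasing_wit X \<theta> C U \<and> increasing_wit X \<theta> D V \<longrightarrow> U ! i = V ! j))
       \<and> (decreasing_on X \<theta> C \<longrightarrow> decreasing_on X \<theta> D \<and>
            (\<forall>U V. decreasing_wit X \<theta> C U \<and> decreasing_wit X \<theta> D V \<longrightarrow>
               U ! (length C - 1 - i) = V ! (length D - 1 - j)))"
proof -
  define E where "E = splice_chain C i D j"
  have "i < length C" "j < length D"
    using assms(7,9) by simp_all
  then have E: "maximal_chain X E"
    unfolding E_def using maximal_chain_splice assms(4,5,10) by blast
  note E_ends = splice_chain_end_edges[OF assms(6) \<open>i < length C\<close> assms(9,10), folded E_def]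
  have inc_C_E: "increasing_on X \<theta> C \<longleftrightarrow> increasing_on X \<theta> E"
    using increasing_on_iff_common_first_edge[OF assms(3,4) E] E_ends assms(6,7,10) by simp
  have inc_E_D: "increasing_on X \<theta> E \<longleftrightarrow> increasing_on X \<theta> D"
    using increasing_on_iff_common_last_edge[OF assms(3) E assms(5)] E_ends assms(8,9) by simp
  have dec_C_E: "decreasing_on X \<theta> C \<longleftrightarrow> decreasing_on X \<theta> E"
    and dec_E_D: "decreasing_on X \<theta> E \<longleftrightarrow> decreasing_on X \<theta> D"
    using inc_C_E inc_E_D decreasing_on_iff_not_increasing_on[OF assms(3)] E E_ends assms(4-9)
    by simp_all
  have inc_vertex: "U ! i = V ! j"
    if U: "increasing_wit X \<theta> C U" and V: "increasing_wit X \<theta> D V" for U V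
  proof -
    obtain W where W: "increasing_wit X \<theta> E W"
      using U inc_C_E unfolding increasing_on_def by blast
    show ?thesis
      using increasing_wit_common_edge[OF U W, of 0 i 0 i]
        increasing_wit_common_edge[OF W V, of i "length E - 1" j "length D - 1"] E_ends assms(6-10)
      by fastforce
  qed
  have dec_vertex: "U ! (length C - 1 - i) = V ! (length D - 1 - j)"
    if U: "decreasing_wit X \<theta> C U" and V: "decreasing_wit X \<theta> D V" for U V
  proof -
    obtain W where W: "decreasing_wit X \<theta> E W"
      using U dec_C_E unfolding decreasing_on_def by blast
    show ?thesis
      using decreasing_wit_common_edge[OF U W, of 0 i 0 i]
        decreasing_wit_common_edge[OF W V, of i "length E - 1" j "length D - 1"] E_ends assms(6-10)
      by fastforce
  qed
  show ?thesis
    using inc_C_E inc_E_D dec_C_E dec_E_D inc_vertex dec_vertex by blast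
qed

end
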